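(* Consider the asynchronous dynamic game described in the context, with fixed $A\in\mathbb{R}^{n\times n}$, $B\in\mathbb{R}^{n\times k}$, and let $l=2j+1$ be an odd epoch. The game is in lock mode from epoch $l$ on, i.e. there exists $\gamma$ with $\Phi_i=\gamma$ for all $i\ge l$, if and only if the matrix $C_l$ chosen by the attacker in epoch $l$ satisfies $\dim\mathcal{V}^*(C_l)=\min_{C\in\mathbb{R}^{m\times n}}\dim\operatorname{Ker}\Omega(C,F_{l-1})$.
   Context: For $C\in\mathbb{R}^{m\times n}$, $F\in\mathbb{R}^{k\times n}$ let $\Omega(C,F)=[C;\,C(A+BF);\,\dots;\,C(A+BF)^{n-1}]$ (observability matrix of $\dot x=(A+BF)x$, $y=Cx$). A subspace $\mathcal{V}$ is $(A,B)$-invariant if $(A+BF)\mathcal{V}\subseteq\mathcal{V}$ for some $F$ (a friend of $\mathcal{V}$); $\mathcal{V}^*(C)$ is the maximal $(A,B)$-invariant subspace in $\operatorname{Ker}C$, and $\mathcal{F}(\mathcal{V}^*(C))$ its set of friends. Best responses: $BR1_a(F)=\arg\min_{C}\dim\operatorname{Ker}\Omega(C,F)$; $BR1_d(C)=\arg\max_{F}\dim\operatorname{Ker}\Omega(C,F)$ ($=\mathcal{F}(\mathcal{V}^*(C))$); $BR2_a(F)=\arg\min_{C\in BR1_a(F)}\dim\mathcal{V}^*(C)$; $BR2_d(C)=\arg\max_{F\in BR1_d(C)}\min_{C'\in\mathbb{R}^{m\times n}}\dim\operatorname{Ker}\Omega(C',F)$. The game: an initial $F_0$ is given; in each odd epoch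 $i$ the attacker chooses $C_i\in BR2_a(F_{i-1})$ (keeping $C_i=C_{i-2}$ whenever $C_{i-2}\in BR2_a(F_{i-1})$), $F_i=F_{i-1}$, and the value is $\Phi_i=\min_{C}\dim\operatorname{Ker}\Omega(C,F_{i-1})$; in each even epoch $i$ the defender chooses $F_i\in BR2_d(C_{i-1})$ (keeping $F_i=F_{i-2}$ whenever $F_{i-2}\in BR2_d(C_{i-1})$), $C_i=C_{i-1}$, and the value is $\Phi_i=\max_{F}\dim\operatorname{Ker}\Omega(C_{i-1},F)$. *)

theory Defs
  imports "HOL-Analysis.Analysis"
begin

text \<open>Fixed system matrices A (n x n) and B (n x k); C (m x n) attacker matrices,
  F (k x n) defender feedback matrices. Dimensions are type-indexed.\<close>

definition closed_loop :: "real^('n::finite)^'n \<Rightarrow> real^('k::finite)^'n \<Rightarrow> real^'n^'k \<Rightarrow> real^'n^'n" where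
  "closed_loop A B F = A + B ** F"

text \<open>Kernel of the observability matrix
  Omega(C,F) = [C; C(A+BF); ...; C(A+BF)^(n-1)], i.e. the intersection of the kernels
  of its n block rows.\<close>
definition obs_ker :: "real^('n::finite)^'n \<Rightarrow> real^('k::finite)^'n \<Rightarrow> real^'n^('m::finite) \<Rightarrow> real^'n^'k \<Rightarrow> (real^'n) set" where
  "obs_ker A B C F =
     {x. \<forall>i < CARD('n). C *v (((\<lambda>y. closed_loop A B F *v y) ^^ i) x) = 0}"

definition kdim :: "real^('n::finite)^'n \<Rightarrow> real^('k::finite)^'n \<Rightarrow> real^'n^('m::finite) \<Rightarrow> real^'n^'k \<Rightarrow> nat" where
  "kdim A B C F = dim (obs_ker A B C F)"

definition is_friend :: "real^('n::finite)^'n \<Rightarrow> real^('k::finite)^'n \<Rightarrow> real^'n^'k \<Rightarrow> (real^'n) set \<Rightarrow> bool" where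
  "is_friend A B F V \<longleftrightarrow> (\<forall>x\<in>V. closed_loop A B F *v x \<in> V)"

definition AB_invariant :: "real^('n::finite)^'n \<Rightarrow> real^('k::finite)^'n \<Rightarrow> (real^'n) set \<Rightarrow> bool" where
  "AB_invariant A B V \<longleftrightarrow> subspace V \<and> (\<exists>F. is_friend A B F V)"

definition Vstar :: "real^('n::finite)^'n \<Rightarrow> real^('k::finite)^'n \<Rightarrow> real^'n^('m::finite) \<Rightarrow> (real^'n) set" where
  "Vstar A B C = (THE V. AB_invariant A B V \<and> V \<subseteq> {x. C *v x = 0} \<and>
      (\<forall>W. AB_invariant A B W \<and> W \<subseteq> {x. C *v x = 0} \<longrightarrow> W \<subseteq> V))"

definition min_kdim :: "real^('n::finite)^'n \<Rightarrow> real^('k::finite)^'n \<Rightarrow> real^'n^'k \<Rightarrow> 'm::finite itself \<Rightarrow> nat" where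
  "min_kdim A B F _ = Inf (range (\<lambda>C::real^'n^'m. kdim A B C F))"

definition max_kdim :: "real^('n::finite)^'n \<Rightarrow> real^('k::finite)^'n \<Rightarrow> real^'n^('m::finite) \<Rightarrow> nat" where
  "max_kdim A B C = Sup (range (\<lambda>F::real^'n^'k. kdim A B C F))"

definition BR1_a :: "real^('n::finite)^'n \<Rightarrow> real^('k::finite)^'n \<Rightarrow> real^'n^'k \<Rightarrow> (real^'n^('m::finite)) set" where
  "BR1_a A B F = {C. \<forall>C'::real^'n^'m. kdim A B C F \<le> kdim A B C' F}"

definition BR1_d :: "real^('n::finite)^'n \<Rightarrow> real^('k::finite)^'n \<Rightarrow> real^'n^('m::finite) \<Rightarrow> (real^'n^'k) set" where
  "BR1_d A B C = {F. \<forall>F'. kdim A B C F' \<le> kdim A B C F}"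

definition BR2_a :: "real^('n::finite)^'n \<Rightarrow> real^('k::finite)^'n \<Rightarrow> real^'n^'k \<Rightarrow> (real^'n^('m::finite)) set" where
  "BR2_a A B F = {C::real^'n^'m. C \<in> BR1_a A B F \<and> (\<forall>C'::real^'n^'m. C' \<in> BR1_a A B F \<longrightarrow> dim (Vstar A B C) \<le> dim (Vstar A B C'))}"

definition BR2_d :: "real^('n::finite)^'n \<Rightarrow> real^('k::finite)^'n \<Rightarrow> real^'n^('m::finite) \<Rightarrow> (real^'n^'k) set" where
  "BR2_d A B C = {F \<in> BR1_d A B C. \<forall>F' \<in> BR1_d A B C.
       min_kdim A B F' TYPE('m) \<le> min_kdim A B F TYPE('m)}"

text \<open>A run of the asynchronous game: epochs i = 1,2,...; Fs 0 is the initial F_0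
  (Cs 0 is irrelevant). Odd epochs: attacker moves; even epochs: defender moves.\<close>
definition game_run :: "real^('n::finite)^'n \<Rightarrow> real^('k::finite)^'n \<Rightarrow> (nat \<Rightarrow> real^'n^('m::finite)) \<Rightarrow> (nat \<Rightarrow> real^'n^'k) \<Rightarrow> bool" where
  "game_run A B Cs Fs \<longleftrightarrow>
     (\<forall>i. odd i \<longrightarrow>
        Cs i \<in> BR2_a A B (Fs (i - 1)) \<and>
        (i \<ge> 3 \<and> Cs (i - 2) \<in> BR2_a A B (Fs (i - 1)) \<longrightarrow> Cs i = Cs (i - 2)) \<and>
        Fs i = Fs (i - 1)) \<and>
     (\<forall>i. even i \<and> i \<ge> 2 \<longrightarrow>
        Fs i \<in> BR2_d A B (Cs (i - 1)) \<and>
        (Fs (i - 2) \<in> BR2_d A B (Cs (i - 1)) \<longrightarrow> Fs i = Fs (i - 2)) \<and>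
        Cs i = Cs (i - 1))"

definition game_value :: "real^('n::finite)^'n \<Rightarrow> real^('k::finite)^'n \<Rightarrow> (nat \<Rightarrow> real^'n^('m::finite)) \<Rightarrow> (nat \<Rightarrow> real^'n^'k) \<Rightarrow> nat \<Rightarrow> nat" where
  "game_value A B Cs Fs i =
     (if odd i then min_kdim A B (Fs (i - 1)) TYPE('m) else max_kdim A B (Cs (i - 1)))"

end

theory Submission
  imports Defs
begin

text \<open>
  The kernels of the truncated observability matrices \<open>[C; CM; \<dots>; CM\<^sup>j\<^sup>-\<^sup>1]\<close> form a decreasing
  chain of subspaces of \<open>\<real>\<^sup>n\<close>, so they are stable from \<open>j = n\<close> on; hence \<open>Ker \<Omega>(C,F)\<close> is
  \<open>(A+BF)\<close>-invariant, so it lies in \<open>V*(C)\<close>, with equality when \<open>F\<close> is a friend of \<open>V*(C)\<close>.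
  Thus the value of the even epoch \<open>l+1\<close> is \<open>dim V*(C\<^sub>l)\<close>, while that of the odd epoch \<open>l\<close> is
  \<open>min\<^sub>C dim Ker \<Omega>(C,F\<^sub>l\<^sub>-\<^sub>1)\<close>; lock mode forces the two to agree. Conversely, if they agree,
  then \<open>F\<^sub>l\<^sub>-\<^sub>1\<close> is itself a defender best response to \<open>C\<^sub>l\<close>, so the defender's reply \<open>G\<close>
  cannot lower the attacker's optimum, \<open>C\<^sub>l\<close> remains an attacker best response to \<open>G\<close>, and the
  tie-keeping rules freeze \<open>C\<^sub>l\<close> and \<open>G\<close> for ever.
\<close>

lemma closed_loop_mult_vec: "closed_loop A B F *v x = A *v x + B *v (F *v x)"
  by (simp add: closed_loop_def matrix_vector_mult_add_rdistrib matrix_vector_mul_assoc)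

lemma subspace_matrix_kernel: "subspace {x. (C::real^'n^'m) *v x = 0}"
  by (auto simp: subspace_def matrix_vector_right_distrib matrix_vector_mult_scaleR)

lemma AB_invariant_iff:
  fixes A :: "real^'n^'n" and B :: "real^'k^'n"
  shows "AB_invariant A B V \<longleftrightarrow> subspace V \<and> (\<forall>x\<in>V. \<exists>u. A *v x + B *v u \<in> V)"
proof
  assume "AB_invariant A B V"
  then obtain F where "subspace V" "\<And>x. x \<in> V \<Longrightarrow> A *v x + B *v (F *v x) \<in> V"
    by (auto simp: AB_invariant_def is_friend_def closed_loop_mult_vec)
  then show "subspace V \<and> (\<forall>x\<in>V. \<exists>u. A *v x + B *v u \<in> V)"
    by blast
next
  assume V: "subspace V \<and> (\<forall>x\<in>V. \<exists>u. A *v x + B *v u \<in> V)"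
  obtain Bs where Bs: "Bs \<subseteq> V" "independent Bs" "V \<subseteq> span Bs"
    by (rule basis_exists)
  define f where "f b = (SOME u. A *v b + B *v u \<in> V)" for b
  have f: "A *v b + B *v f b \<in> V" if "b \<in> Bs" for b
    unfolding f_def by (rule someI_ex) (use V Bs(1) that in blast)
  \<comment> \<open>The friend is the linear extension of a choice of inputs on a basis of \<open>V\<close>.\<close>
  obtain g where g: "linear g" "\<forall>b\<in>Bs. g b = f b"
    using linear_independent_extend[OF Bs(2)] by auto
  define F where "F = matrix g"
  have Fg: "F *v x = g x" for x
    unfolding F_def using g(1) by (simp add: matrix_works scalar_mult_eq_scaleR)
  have sub: "subspace {x. closed_loop A B F *v x \<in> V}"
    using linear_subspace_vimage[OF matrix_vector_mul_linear, of V "closed_loop A B F"] V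
    by (simp add: vimage_def)
  have "closed_loop A B F *v x \<in> V" if "x \<in> V" for x
  proof (rule span_induct[OF _ sub])
    show "x \<in> span Bs"
      using that Bs(3) by blast
  next
    fix b assume "b \<in> Bs"
    then show "closed_loop A B F *v b \<in> V"
      using f g(2) by (simp add: closed_loop_mult_vec Fg)
  qed
  then show "AB_invariant A B V"
    using V unfolding AB_invariant_def is_friend_def by blast
qed

lemma AB_invariant_span_Un:
  fixes A :: "real^'n^'n" and B :: "real^'k^'n"
  assumes V: "AB_invariant A B V" and W: "AB_invariant A B W"
  shows "AB_invariant A B (span (V \<union> W))"
  unfolding AB_invariant_iff
proof (intro conjI ballI subspace_span)
  fix x assume "x \<in> span (V \<union> W)"
  moreover have "span V = V" "span W = W"
    using V W by (simp_all add: AB_invariant_iff span_eq_iff)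
  ultimately obtain v w where x: "x = v + w" "v \<in> V" "w \<in> W"
    unfolding span_Un by blast
  then obtain u u' where "A *v v + B *v u \<in> V" "A *v w + B *v u' \<in> W"
    using V W by (meson AB_invariant_iff)
  then have "(A *v v + B *v u) + (A *v w + B *v u') \<in> span (V \<union> W)"
    by (meson UnCI span_add span_base)
  then have "A *v x + B *v (u + u') \<in> span (V \<union> W)"
    by (simp add: x matrix_vector_right_distrib algebra_simps)
  then show "\<exists>u. A *v x + B *v u \<in> span (V \<union> W)" ..
qed

lemma greatest_AB_invariant_subspace_ex:
  fixes A :: "real^'n^'n" and B :: "real^'k^'n"
  assumes K: "subspace K"
  shows "\<exists>V. AB_invariant A B V \<and> V \<subseteq> K \<and> (\<forall>W. AB_invariant A B W \<and> W \<subseteq> K \<longrightarrow> W \<subseteq> V)"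
proof -
  define P where "P W \<longleftrightarrow> AB_invariant A B W \<and> W \<subseteq> K" for W
  have "P {0}"
    using K by (auto simp: P_def AB_invariant_def is_friend_def subspace_0)
  moreover have "\<forall>W. P W \<longrightarrow> dim W < Suc CARD('n)"
    using dim_subset_UNIV_cart by (metis less_Suc_eq_le)
  ultimately obtain V where V: "P V" and V_max: "\<And>W. P W \<Longrightarrow> dim W \<le> dim V"
    using ex_has_greatest_nat[of P "{0}" dim "Suc CARD('n)"] by blast
  \<comment> \<open>\<open>V + W\<close> is again a candidate, so maximality of \<open>dim V\<close> forces \<open>V + W = V\<close>.\<close>
  have "W \<subseteq> V" if W: "P W" for W
  proof -
    have "P (span (V \<union> W))"
      using V W K span_minimal[of "V \<union> W" K] by (auto simp: P_def AB_invariant_span_Un)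
    then have "span V = span (span (V \<union> W))"
      by (intro dim_eq_span V_max) (auto intro: span_base)
    moreover have "span V = V"
      using V by (simp add: P_def AB_invariant_def span_eq_iff)
    ultimately show "W \<subseteq> V"
      by (metis span_span span_superset Un_subset_iff)
  qed
  with V show ?thesis by (auto simp: P_def)
qed

lemma
  fixes A :: "real^'n^'n" and B :: "real^'k^'n" and C :: "real^'n^'m"
  shows AB_invariant_Vstar: "AB_invariant A B (Vstar A B C)"
    and Vstar_subset_kernel: "Vstar A B C \<subseteq> {x. C *v x = 0}"
    and subset_Vstar: "\<lbrakk>AB_invariant A B W; W \<subseteq> {x. C *v x = 0}\<rbrakk> \<Longrightarrow> W \<subseteq> Vstar A B C"
proof -
  define greatest where "greatest V \<longleftrightarrow> AB_invariant A B V \<and> V \<subseteq> {x. C *v x = 0} \<and>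
      (\<forall>W. AB_invariant A B W \<and> W \<subseteq> {x. C *v x = 0} \<longrightarrow> W \<subseteq> V)" for V
  have "\<exists>!V. greatest V"
    using greatest_AB_invariant_subspace_ex[OF subspace_matrix_kernel, of A B C]
    by (metis (no_types, lifting) greatest_def subset_antisym)
  then have "greatest (Vstar A B C)"
    unfolding Vstar_def greatest_def[symmetric] by (rule theI')
  then show "AB_invariant A B (Vstar A B C)" "Vstar A B C \<subseteq> {x. C *v x = 0}"
    and "\<lbrakk>AB_invariant A B W; W \<subseteq> {x. C *v x = 0}\<rbrakk> \<Longrightarrow> W \<subseteq> Vstar A B C"
    by (auto simp: greatest_def)
qed

lemma decseq_subspace_stabilizes:
  fixes S :: "nat \<Rightarrow> 'a::euclidean_space set"
  assumes sub: "\<And>j. subspace (S j)" and dec: "\<And>j. S (Suc j) \<subseteq> S j"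
  shows "\<exists>j\<le>DIM('a). S (Suc j) = S j"
proof (rule ccontr)
  assume "\<not> ?thesis"
  then have strict: "dim (S (Suc j)) < dim (S j)" if "j \<le> DIM('a)" for j
    using that dec[of j] sub by (metis dim_psubset psubsetI span_eq_iff)
  have "dim (S j) + j \<le> DIM('a)" if "j \<le> Suc DIM('a)" for j
    using that
  proof (induction j)
    case 0
    then show ?case
      by (simp add: dim_subset_UNIV)
  next
    case (Suc j)
    then show ?case
      using strict[of j] by simp
  qed
  from this[of "Suc DIM('a)"] show False
    by simp
qed

definition obs_ker_upto :: "real^'n^'n \<Rightarrow> real^'n^'m \<Rightarrow> nat \<Rightarrow> (real^'n) set" where
  "obs_ker_upto M C j = {x. \<forall>i<j. C *v (((\<lambda>y. M *v y) ^^ i) x) = 0}"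

lemma obs_ker_upto_Suc: "obs_ker_upto M C (Suc j) = {x. C *v x = 0 \<and> M *v x \<in> obs_ker_upto M C j}"
  unfolding obs_ker_upto_def by (auto simp: All_less_Suc2 funpow_Suc_right simp del: funpow.simps)

lemma obs_ker_upto_Suc_subset: "obs_ker_upto M C (Suc j) \<subseteq> obs_ker_upto M C j"
  unfolding obs_ker_upto_def by auto

lemma subspace_obs_ker_upto: "subspace (obs_ker_upto M C j)"
proof (induction j)
  case 0
  then show ?case
    by (simp add: obs_ker_upto_def subspace_UNIV)
next
  case (Suc j)
  have "obs_ker_upto M C (Suc j) = {x. C *v x = 0} \<inter> (\<lambda>x. M *v x) -` obs_ker_upto M C j"
    by (auto simp: obs_ker_upto_Suc)
  moreover have "subspace ((\<lambda>x. M *v x) -` obs_ker_upto M C j)"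
    using linear_subspace_vimage[OF matrix_vector_mul_linear Suc] .
  ultimately show ?case
    by (metis subspace_matrix_kernel subspace_inter)
qed

lemma obs_ker_upto_stable:
  assumes "obs_ker_upto M C (Suc j) = obs_ker_upto M C j"
  shows "obs_ker_upto M C (Suc (j + d)) = obs_ker_upto M C (j + d)"
  using assms by (induction d) (simp_all add: obs_ker_upto_Suc)

lemma obs_ker_upto_CARD_stable:
  fixes M :: "real^'n^'n"
  shows "obs_ker_upto M C (Suc CARD('n)) = obs_ker_upto M C CARD('n)"
proof -
  obtain j where "j \<le> CARD('n)" "obs_ker_upto M C (Suc j) = obs_ker_upto M C j"
    using decseq_subspace_stabilizes[of "obs_ker_upto M C"]
    by (auto simp: subspace_obs_ker_upto obs_ker_upto_Suc_subset)
  then show ?thesis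
    using obs_ker_upto_stable[of M C j "CARD('n) - j"] by simp
qed

lemma obs_ker_eq_obs_ker_upto: "obs_ker A B C F = obs_ker_upto (closed_loop A B F) C CARD('n)"
  for A :: "real^'n^'n" and B :: "real^'k^'n" and C :: "real^'n^'m"
  by (simp add: obs_ker_def obs_ker_upto_def)

lemma obs_ker_subset_kernel: "obs_ker A B C F \<subseteq> {x. C *v x = 0}"
  for A :: "real^'n^'n" and B :: "real^'k^'n" and C :: "real^'n^'m"
  by (auto simp: obs_ker_def dest: spec[of _ 0])

lemma is_friend_obs_ker: "is_friend A B F (obs_ker A B C F)"
  for A :: "real^'n^'n" and B :: "real^'k^'n" and C :: "real^'n^'m"
proof -
  let ?M = "closed_loop A B F"
  have "obs_ker_upto ?M C CARD('n) = obs_ker_upto ?M C (Suc CARD('n))"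
    by (rule obs_ker_upto_CARD_stable[symmetric])
  also have "\<dots> = {x. C *v x = 0 \<and> ?M *v x \<in> obs_ker_upto ?M C CARD('n)}"
    by (rule obs_ker_upto_Suc)
  finally show ?thesis
    unfolding is_friend_def obs_ker_eq_obs_ker_upto by blast
qed

lemma AB_invariant_obs_ker: "AB_invariant A B (obs_ker A B C F)"
  for A :: "real^'n^'n" and B :: "real^'k^'n" and C :: "real^'n^'m"
  using is_friend_obs_ker subspace_obs_ker_upto
  unfolding AB_invariant_def obs_ker_eq_obs_ker_upto by blast

lemma obs_ker_friend_Vstar:
  fixes A :: "real^'n^'n" and B :: "real^'k^'n" and C :: "real^'n^'m"
  assumes F: "is_friend A B F (Vstar A B C)"
  shows "obs_ker A B C F = Vstar A B C"
proof
  show "obs_ker A B C F \<subseteq> Vstar A B C"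
    by (intro subset_Vstar AB_invariant_obs_ker obs_ker_subset_kernel)
  have "((\<lambda>y. closed_loop A B F *v y) ^^ i) x \<in> Vstar A B C" if "x \<in> Vstar A B C" for x i
    using that F by (induction i) (auto simp: is_friend_def)
  then show "Vstar A B C \<subseteq> obs_ker A B C F"
    using Vstar_subset_kernel unfolding obs_ker_def by blast
qed

lemma kdim_le_dim_Vstar: "kdim A B C F \<le> dim (Vstar A B C)"
  for A :: "real^'n^'n" and B :: "real^'k^'n" and C :: "real^'n^'m"
  unfolding kdim_def
  by (intro dim_subset subset_Vstar AB_invariant_obs_ker obs_ker_subset_kernel)

lemma kdim_attains_dim_Vstar: "\<exists>F. kdim A B C F = dim (Vstar A B C)"
  for A :: "real^'n^'n" and B :: "real^'k^'n" and C :: "real^'n^'m"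
proof -
  obtain F where "is_friend A B F (Vstar A B C)"
    using AB_invariant_Vstar[of A B C] by (auto simp: AB_invariant_def)
  then have "kdim A B C F = dim (Vstar A B C)"
    by (simp add: kdim_def obs_ker_friend_Vstar)
  then show ?thesis ..
qed

lemma max_kdim_eq_dim_Vstar: "max_kdim A B C = dim (Vstar A B C)"
  for A :: "real^'n^'n" and B :: "real^'k^'n" and C :: "real^'n^'m"
  unfolding max_kdim_def
proof (rule cSup_eq_maximum)
  show "dim (Vstar A B C) \<in> range (kdim A B C)"
    using kdim_attains_dim_Vstar[of A B C] by (metis rangeI)
qed (auto simp: kdim_le_dim_Vstar)

lemma BR1_d_iff: "F \<in> BR1_d A B C \<longleftrightarrow> kdim A B C F = dim (Vstar A B C)"
  for A :: "real^'n^'n" and B :: "real^'k^'n" and C :: "real^'n^'m"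
proof
  assume "F \<in> BR1_d A B C"
  moreover obtain F' where "kdim A B C F' = dim (Vstar A B C)"
    using kdim_attains_dim_Vstar by blast
  ultimately have "dim (Vstar A B C) \<le> kdim A B C F"
    unfolding BR1_d_def by (metis (no_types, lifting) mem_Collect_eq)
  then show "kdim A B C F = dim (Vstar A B C)"
    using kdim_le_dim_Vstar[of A B C F] by simp
qed (simp add: BR1_d_def kdim_le_dim_Vstar)

lemma min_kdim_le: "min_kdim A B F TYPE('m) \<le> kdim A B C F"
  for A :: "real^'n^'n" and B :: "real^'k^'n" and C :: "real^'n^'m"
  unfolding min_kdim_def by (rule cInf_lower) auto

lemma min_kdim_attained: "\<exists>C::real^'n^'m. kdim A B C F = min_kdim A B F TYPE('m)"
  for A :: "real^'n^'n" and B :: "real^'k^'n"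
  unfolding min_kdim_def using Inf_nat_def1[of "range (\<lambda>C::real^'n^'m. kdim A B C F)"] by auto

lemma BR1_a_iff: "C \<in> BR1_a A B F \<longleftrightarrow> kdim A B C F = min_kdim A B F TYPE('m)"
  for A :: "real^'n^'n" and B :: "real^'k^'n" and C :: "real^'n^'m"
proof
  assume "C \<in> BR1_a A B F"
  moreover obtain C' :: "real^'n^'m" where "kdim A B C' F = min_kdim A B F TYPE('m)"
    using min_kdim_attained by blast
  ultimately have "kdim A B C F \<le> min_kdim A B F TYPE('m)"
    unfolding BR1_a_def by (metis (no_types, lifting) mem_Collect_eq)
  then show "kdim A B C F = min_kdim A B F TYPE('m)"
    using min_kdim_le[of A B F C] by simp
qed (simp add: BR1_a_def min_kdim_le)

lemma
  fixes A :: "real^'n^'n" and B :: "real^'k^'n" and C :: "real^'n^'m"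
  assumes C: "C \<in> BR1_a A B F"
    and tie: "dim (Vstar A B C) = min_kdim A B F TYPE('m)"
    and G: "G \<in> BR2_d A B C"
  shows min_kdim_BR2_d_response: "min_kdim A B G TYPE('m) = dim (Vstar A B C)"
    and BR2_a_BR2_d_response: "C \<in> BR2_a A B G"
proof -
  have kdim_G: "kdim A B C G = dim (Vstar A B C)"
    using G by (simp add: BR2_d_def BR1_d_iff)
  have "F \<in> BR1_d A B C"
    using C tie by (simp add: BR1_a_iff BR1_d_iff)
  then have "min_kdim A B F TYPE('m) \<le> min_kdim A B G TYPE('m)"
    using G by (simp add: BR2_d_def)
  moreover have "min_kdim A B G TYPE('m) \<le> kdim A B C G"
    by (rule min_kdim_le)
  ultimately show min_G: "min_kdim A B G TYPE('m) = dim (Vstar A B C)"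
    using kdim_G tie by simp
  show "C \<in> BR2_a A B G"
    unfolding BR2_a_def
  proof (intro CollectI conjI allI impI)
    show "C \<in> BR1_a A B G"
      using kdim_G min_G by (simp add: BR1_a_iff)
    fix C' :: "real^'n^'m"
    assume "C' \<in> BR1_a A B G"
    then show "dim (Vstar A B C) \<le> dim (Vstar A B C')"
      using kdim_le_dim_Vstar[of A B C' G] min_G by (simp add: BR1_a_iff)
  qed
qed

lemma
  assumes "game_run A B Cs Fs" and "odd i"
  shows game_run_attacker_best: "Cs i \<in> BR2_a A B (Fs (i - 1))"
    and game_run_attacker_keeps:
      "\<lbrakk>3 \<le> i; Cs (i - 2) \<in> BR2_a A B (Fs (i - 1))\<rbrakk> \<Longrightarrow> Cs i = Cs (i - 2)"
    and game_run_attacker_Fs: "Fs i = Fs (i - 1)"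
  using assms by (auto simp: game_run_def)

lemma
  assumes "game_run A B Cs Fs" and "even i" and "2 \<le> i"
  shows game_run_defender_best: "Fs i \<in> BR2_d A B (Cs (i - 1))"
    and game_run_defender_keeps: "Fs (i - 2) \<in> BR2_d A B (Cs (i - 1)) \<Longrightarrow> Fs i = Fs (i - 2)"
    and game_run_defender_Cs: "Cs i = Cs (i - 1)"
  using assms by (auto simp: game_run_def)

lemma game_run_locked:
  assumes run: "game_run A B Cs Fs" and l: "odd l"
    and lock: "Cs l \<in> BR2_a A B (Fs (Suc l))"
  shows "Cs (l + d) = Cs l \<and> (0 < d \<longrightarrow> Fs (l + d) = Fs (Suc l))"
proof -
  define G where "G = Fs (Suc l)"
  have G: "G \<in> BR2_d A B (Cs l)"
    using game_run_defender_best[OF run, of "Suc l"] l odd_pos[OF l] by (simp add: G_def)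
  define P where "P d \<longleftrightarrow> Cs (l + d) = Cs l \<and> (0 < d \<longrightarrow> Fs (l + d) = G)" for d
  have "P d \<and> P (Suc d)" for d
  proof (induction d)
    case 0
    show ?case
      using game_run_defender_Cs[OF run, of "Suc l"] l odd_pos[OF l] by (simp add: P_def G_def)
  next
    case (Suc d)
    let ?i = "l + Suc (Suc d)"
    have "Cs ?i = Cs l \<and> Fs ?i = G"
    proof (cases "even d")
      case True
      then have i: "odd ?i" "3 \<le> ?i" "?i - 1 = l + Suc d" "?i - 2 = l + d"
        using l odd_pos[OF l] by simp_all
      then have "Cs ?i = Cs l"
        using game_run_attacker_keeps[OF run i(1,2)] lock Suc.IH by (simp add: P_def G_def)
      moreover have "Fs ?i = G"
        using game_run_attacker_Fs[OF run i(1)] i Suc.IH by (simp add: P_def)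
      ultimately show ?thesis ..
    next
      case False
      then have i: "even ?i" "2 \<le> ?i" "?i - 1 = l + Suc d" "?i - 2 = l + d" "0 < d"
        using l by (simp_all add: odd_pos)
      then have "Cs ?i = Cs l"
        using game_run_defender_Cs[OF run i(1,2)] Suc.IH by (simp add: P_def)
      moreover have "Fs ?i = G"
        using game_run_defender_keeps[OF run i(1,2)] i G Suc.IH by (simp add: P_def)
      ultimately show ?thesis ..
    qed
    with Suc.IH show ?case
      by (simp add: P_def)
  qed
  then show ?thesis
    by (simp add: P_def G_def)
qed

lemma game_value_odd: "odd i \<Longrightarrow> game_value A B Cs Fs i = min_kdim A B (Fs (i - 1)) TYPE('m)"
  for Cs :: "nat \<Rightarrow> real^'n^'m"
  by (simp add: game_value_def)

lemma game_value_even: "even i \<Longrightarrow> game_value A B Cs Fs i = dim (Vstar A B (Cs (i - 1)))"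
  by (simp add: game_value_def max_kdim_eq_dim_Vstar)

lemma game_value_locked:
  fixes Cs :: "nat \<Rightarrow> real^'n^'m"
  assumes run: "game_run A B Cs Fs" and l: "odd l"
    and tie: "dim (Vstar A B (Cs l)) = min_kdim A B (Fs (l - 1)) TYPE('m)"
    and "l \<le> i"
  shows "game_value A B Cs Fs i = dim (Vstar A B (Cs l))"
proof -
  have "Cs l \<in> BR1_a A B (Fs (l - 1))"
    using game_run_attacker_best[OF run l] by (simp add: BR2_a_def)
  moreover have "Fs (Suc l) \<in> BR2_d A B (Cs l)"
    using game_run_defender_best[OF run, of "Suc l"] l odd_pos[OF l] by simp
  ultimately have min_G: "min_kdim A B (Fs (Suc l)) TYPE('m) = dim (Vstar A B (Cs l))"
    and locked: "\<And>d. Cs (l + d) = Cs l \<and> (0 < d \<longrightarrow> Fs (l + d) = Fs (Suc l))"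
    using tie min_kdim_BR2_d_response BR2_a_BR2_d_response game_run_locked[OF run l]
    by blast+
  have "i = l \<or> odd i \<and> Suc l < i \<or> even i \<and> l < i"
    using \<open>l \<le> i\<close> l by presburger
  then consider "i = l" | "odd i" "Suc l < i" | "even i" "l < i"
    by blast
  then show ?thesis
  proof cases
    case 1
    then show ?thesis
      using l tie by (simp add: game_value_odd)
  next
    case 2
    then show ?thesis
      using locked[of "i - 1 - l"] by (simp add: game_value_odd min_G)
  next
    case 3
    then show ?thesis
      using locked[of "i - 1 - l"] by (simp add: game_value_even)
  qed
qed

theorem theorem1:
  fixes A :: "real^'n^'n" and B :: "real^'k^'n"
    and Cs :: "nat \<Rightarrow> real^'n^'m" and Fs :: "nat \<Rightarrow> real^'n^'k"
    and j :: nat and l :: nat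
  assumes "game_run A B Cs Fs"
    and "l = 2 * j + 1"
  shows "(\<exists>\<gamma>. \<forall>i\<ge>l. game_value A B Cs Fs i = \<gamma>) \<longleftrightarrow>
         dim (Vstar A B (Cs l)) = min_kdim A B (Fs (l - 1)) TYPE('m)"
proof -
  have l: "odd l"
    using assms(2) by simp
  show ?thesis
  proof
    assume "\<exists>\<gamma>. \<forall>i\<ge>l. game_value A B Cs Fs i = \<gamma>"
    then have "game_value A B Cs Fs (Suc l) = game_value A B Cs Fs l"
      by (metis le_SucI order_refl)
    then show "dim (Vstar A B (Cs l)) = min_kdim A B (Fs (l - 1)) TYPE('m)"
      using l by (simp add: game_value_odd game_value_even)
  next
    assume "dim (Vstar A B (Cs l)) = min_kdim A B (Fs (l - 1)) TYPE('m)"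
    then show "\<exists>\<gamma>. \<forall>i\<ge>l. game_value A B Cs Fs i = \<gamma>"
      using game_value_locked[OF assms(1) l] by blast
  qed
qed

end
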